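(* The following are equivalent: (a) $U_0=U_1=\dots=U_n=0$ (zero vectors); (b) for every $k\in\mathbb{R}^m\setminus\{0\}$ every eigenvalue of $\mathcal{N}(k)$ is purely imaginary. Moreover, if some $U_i\neq0$, there exist $k\in\mathbb{R}^m\setminus\{0\}$ and an eigenvalue $\lambda$ of $\mathcal{N}(k)$ with $\operatorname{Re}\lambda>0$ (the linear problem in $m+1$ spatial dimensions is asymptotically unstable), while if all $U_i=0$ it is asymptotically stable.
   Context: Fix $m\ge1$, $n\ge1$, real numbers $h_0<h_1<\dots<h_{n+1}$, $\Delta h_i=h_{i+1}-h_i$ ($0\le i\le n$), and vectors $U_0,\dots,U_n\in\mathbb{R}^m$. For $k\in\mathbb{R}^m\setminus\{0\}$, with $\rho=\|k\|$, define the symmetric tridiagonal $n\times n$ real matrices (indices $1\le i\le n$; off-diagonals $1\le i\le n-1$; other entries zero): $\mathcal{P}_{ii}=1+\frac{\coth(\rho\Delta h_{i-1})+\coth(\rho\Delta h_i)}{\rho}$, $\mathcal{P}_{i,i+1}=\mathcal{P}_{i+1,i}=-\frac{\operatorname{csch}(\rho\Delta h_i)}{\rho}$; $\mathcal{Q}_{ii}=\frac{(k\cdot U_{i-1})^2\coth(\rho\Delta h_{i-1})+(k\cdot U_i)^2\coth(\rho\Delta h_i)}{\rho}$, $\mathcal{Q}_{i,i+1}=\mathcal{Q}_{i+1,i}=-\frac{(k\cdot U_i)^2\operatorname{csch}(\rho\Delta h_i)}{\rho}$; $\mathcal{R}_{ii}=\frac{(k\cdot U_{i-1})\coth(\rho\Delta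 h_{i-1})+(k\cdot U_i)\coth(\rho\Delta h_i)}{\rho}$, $\mathcal{R}_{i,i+1}=\mathcal{R}_{i+1,i}=-\frac{(k\cdot U_i)\operatorname{csch}(\rho\Delta h_i)}{\rho}$. Set $\mathcal{N}_1(k)=\begin{pmatrix}I_n&0\\0&\mathcal{P}(k)\end{pmatrix}$, $\mathcal{N}_2(k)=\begin{pmatrix}0&I_n\\\mathcal{Q}(k)-\|k\|^4I_n&-2i\,\mathcal{R}(k)\end{pmatrix}$, $\mathcal{N}(k)=\mathcal{N}_1(k)^{-1}\mathcal{N}_2(k)$. Instability is detected by an eigenvalue of $\mathcal{N}(k)$ with positive real part for some $k$. *)

theory Defs
  imports "Jordan_Normal_Form.Jordan_Normal_Form"
begin

definition coth :: "real \<Rightarrow> real" where "coth x = cosh x / sinh x"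
definition csch :: "real \<Rightarrow> real" where "csch x = 1 / sinh x"

definition dh :: "(nat \<Rightarrow> real) \<Rightarrow> nat \<Rightarrow> real" where "dh h i = h (Suc i) - h i"

definition vnorm :: "real vec \<Rightarrow> real" where "vnorm k = sqrt (k \<bullet> k)"

(* Generic symmetric tridiagonal n x n matrix, 0-based indices: paper index i = our index i+1.
   Diagonal entry (i,i) = (a i * coth(rho dh_i) + a (i+1) * coth(rho dh_(i+1))) / rho,
   off-diagonal (i,i+1) = (i+1,i) = - a (i+1) * csch(rho dh_(i+1)) / rho. *)
definition tri_mat :: "nat \<Rightarrow> real \<Rightarrow> (nat \<Rightarrow> real) \<Rightarrow> (nat \<Rightarrow> real) \<Rightarrow> real mat" where
  "tri_mat n \<rho> h a = mat n n (\<lambda>(i,j).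
      if i = j then (a i * coth (\<rho> * dh h i) + a (Suc i) * coth (\<rho> * dh h (Suc i))) / \<rho>
      else if j = Suc i then - a (Suc i) * csch (\<rho> * dh h (Suc i)) / \<rho>
      else if i = Suc j then - a (Suc j) * csch (\<rho> * dh h (Suc j)) / \<rho>
      else 0)"

definition P_mat :: "nat \<Rightarrow> (nat \<Rightarrow> real) \<Rightarrow> real vec \<Rightarrow> real mat" where
  "P_mat n h k = 1\<^sub>m n + tri_mat n (vnorm k) h (\<lambda>_. 1)"

definition Q_mat :: "nat \<Rightarrow> (nat \<Rightarrow> real) \<Rightarrow> (nat \<Rightarrow> real vec) \<Rightarrow> real vec \<Rightarrow> real mat" where
  "Q_mat n h U k = tri_mat n (vnorm k) h (\<lambda>i. (k \<bullet> U i)^2)"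

definition R_mat :: "nat \<Rightarrow> (nat \<Rightarrow> real) \<Rightarrow> (nat \<Rightarrow> real vec) \<Rightarrow> real vec \<Rightarrow> real mat" where
  "R_mat n h U k = tri_mat n (vnorm k) h (\<lambda>i. k \<bullet> U i)"

definition cmat :: "real mat \<Rightarrow> complex mat" where "cmat A = map_mat complex_of_real A"

definition N1_mat :: "nat \<Rightarrow> (nat \<Rightarrow> real) \<Rightarrow> real vec \<Rightarrow> complex mat" where
  "N1_mat n h k = four_block_mat (1\<^sub>m n) (0\<^sub>m n n) (0\<^sub>m n n) (cmat (P_mat n h k))"

definition N2_mat :: "nat \<Rightarrow> (nat \<Rightarrow> real) \<Rightarrow> (nat \<Rightarrow> real vec) \<Rightarrow> real vec \<Rightarrow> complex mat" where
  "N2_mat n h U k = four_block_mat (0\<^sub>m n n) (1\<^sub>m n)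
      (cmat (Q_mat n h U k) - complex_of_real (vnorm k ^ 4) \<cdot>\<^sub>m 1\<^sub>m n)
      ((- 2 * \<i>) \<cdot>\<^sub>m cmat (R_mat n h U k))"

(* N = N1^{-1} N2 (N1 is invertible; mat_inverse is the library's matrix inverse) *)
definition N_mat :: "nat \<Rightarrow> (nat \<Rightarrow> real) \<Rightarrow> (nat \<Rightarrow> real vec) \<Rightarrow> real vec \<Rightarrow> complex mat" where
  "N_mat n h U k = the (mat_inverse (N1_mat n h k)) * N2_mat n h U k"

end

theory Submission
  imports Defs "Jordan_Normal_Form.Spectral_Radius" "HOL-Real_Asymp.Real_Asymp"
begin

text \<open>
  Block elimination shows that \<open>z\<close> is an eigenvalue
  of \<open>N(k)\<close> iff the dispersion matrix \<open>L(z) = (z\<^sup>2 + |k|\<^sup>4) I + T((z + i k\<cdot>U\<^sub>l)\<^sup>2)\<close> is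
  singular, where \<open>T(a)\<close> is the tridiagonal coth/csch matrix with edge weights \<open>a\<^sub>l\<close> and
  \<open>P = I + T(1)\<close> is diagonally dominant with real eigenvalues \<open>\<ge> 1\<close>.  If \<open>k\<cdot>U\<^sub>l = 0\<close> then
  \<open>L(z) = z\<^sup>2 P + |k|\<^sup>4 I\<close> forces \<open>z\<^sup>2 < 0\<close>.  If some \<open>e = U\<^sub>i \<noteq> 0\<close> has equal projections
  \<open>e\<cdot>U\<^sub>l\<close>, an eigenvector of \<open>P\<close> gives an explicit growing mode for a short \<open>k\<close> along \<open>e\<close>.
  Otherwise, if no mode grew, the bound \<open>|det L(z)| \<ge> |det P| (Re z)\<^sup>2\<^sup>n\<close> at \<open>z = i\<rho>\<nu>\<close>
  would survive the long-wave limit \<open>\<rho> \<rightarrow> 0\<close>, where both sides become weighted path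
  Laplacians, and a non-real zero \<open>\<nu>\<close> of \<open>\<Sum>\<^sub>l \<Delta>h\<^sub>l/(\<nu> + v\<^sub>l)\<^sup>2\<close> makes the left one singular.
\<close>

section \<open>Hermitian forms of real symmetric matrices\<close>

definition herm_form :: "complex mat \<Rightarrow> complex vec \<Rightarrow> complex" where
  "herm_form A x = (\<Sum>i<dim_vec x. cnj (x $ i) * (A *\<^sub>v x) $ i)"

definition sq_norm :: "complex vec \<Rightarrow> real" where
  "sq_norm x = (\<Sum>i<dim_vec x. (cmod (x $ i))\<^sup>2)"

lemma cmat_carrier [simp]: "A \<in> carrier_mat n m \<Longrightarrow> cmat A \<in> carrier_mat n m"
  unfolding cmat_def by simp

lemma cmat_dim [simp]: "dim_row (cmat A) = dim_row A" "dim_col (cmat A) = dim_col A"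
  unfolding cmat_def by simp_all

lemma cmat_index [simp]: "i < dim_row A \<Longrightarrow> j < dim_col A \<Longrightarrow> cmat A $$ (i,j) = of_real (A $$ (i,j))"
  unfolding cmat_def by simp

lemma sq_norm_pos:
  assumes "x \<in> carrier_vec n" and "x \<noteq> 0\<^sub>v n"
  shows "sq_norm x > 0"
proof -
  obtain i where i: "i < n" "x $ i \<noteq> 0"
    using assms by (metis eq_vecI carrier_vecD index_zero_vec)
  have "(cmod (x $ i))\<^sup>2 \<le> sq_norm x"
    unfolding sq_norm_def using assms(1) i by (intro member_le_sum) auto
  moreover have "(cmod (x $ i))\<^sup>2 > 0" using i by simp
  ultimately show ?thesis by linarith
qed

lemma herm_form_eigenvector:
  assumes "A *\<^sub>v x = p \<cdot>\<^sub>v x"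
  shows "herm_form A x = p * of_real (sq_norm x)"
  unfolding herm_form_def sq_norm_def assms using complex_norm_square
  by (simp add: sum_distrib_left algebra_simps)

lemma herm_form_cmat:
  assumes A: "A \<in> carrier_mat n n" and x: "x \<in> carrier_vec n"
  shows "herm_form (cmat A) x = (\<Sum>i<n. \<Sum>j<n. of_real (A $$ (i,j)) * (cnj (x $ i) * x $ j))"
proof -
  have "(cmat A *\<^sub>v x) $ i = (\<Sum>j<n. of_real (A $$ (i,j)) * x $ j)" if "i < n" for i
    using A x that unfolding cmat_def
    by (auto simp: mult_mat_vec_def scalar_prod_def lessThan_atLeast0 intro!: sum.cong)
  then show ?thesis
    unfolding herm_form_def using x by (auto simp: sum_distrib_left algebra_simps intro!: sum.cong)
qed

lemma herm_form_symmetric_real: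
  assumes A: "A \<in> carrier_mat n n" and sym: "\<And>i j. i < n \<Longrightarrow> j < n \<Longrightarrow> A $$ (i,j) = A $$ (j,i)"
    and x: "x \<in> carrier_vec n"
  shows "Im (herm_form (cmat A) x) = 0"
proof -
  let ?q = "herm_form (cmat A) x"
  have "cnj ?q = (\<Sum>i<n. \<Sum>j<n. of_real (A $$ (i,j)) * (cnj (x $ j) * x $ i))"
    unfolding herm_form_cmat[OF A x] by (simp add: algebra_simps)
  also have "\<dots> = (\<Sum>j<n. \<Sum>i<n. of_real (A $$ (i,j)) * (cnj (x $ j) * x $ i))"
    by (rule sum.swap)
  also have "\<dots> = ?q"
    unfolding herm_form_cmat[OF A x] by (intro sum.cong refl) (simp add: sym)
  finally show ?thesis by (metis Reals_cnj_iff complex_is_Real_iff)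
qed

lemma abs_Re_cnj_mult_le: "\<bar>Re (cnj a * b)\<bar> \<le> ((cmod a)\<^sup>2 + (cmod b)\<^sup>2) / 2"
proof -
  have "\<bar>Re (cnj a * b)\<bar> \<le> cmod a * cmod b"
    using abs_Re_le_cmod[of "cnj a * b"] by (simp add: norm_mult)
  also have "\<dots> \<le> ((cmod a)\<^sup>2 + (cmod b)\<^sup>2) / 2"
    using sum_squares_bound[of "cmod a" "cmod b"] by (simp add: power2_eq_square algebra_simps)
  finally show ?thesis .
qed

text \<open>Diagonal dominance with margin \<open>\<epsilon>\<close> bounds the Hermitian form of a real symmetric matrix
  from below: each off-diagonal product is split by AM-GM and redistributed by symmetry.\<close>

lemma herm_form_diag_dominant:
  assumes A: "A \<in> carrier_mat n n" and sym: "\<And>i j. i < n \<Longrightarrow> j < n \<Longrightarrow> A $$ (i,j) = A $$ (j,i)"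
    and dom: "\<And>i. i < n \<Longrightarrow> A $$ (i,i) - (\<Sum>j<n. if j = i then 0 else \<bar>A $$ (i,j)\<bar>) \<ge> \<epsilon>"
    and x: "x \<in> carrier_vec n"
  shows "Re (herm_form (cmat A) x) \<ge> \<epsilon> * sq_norm x"
proof -
  define a where "a i = (cmod (x $ i))\<^sup>2" for i
  define s where "s i j = (if j = i then 0 else \<bar>A $$ (i,j)\<bar>)" for i j
  have term_bound: "A $$ (i,j) * Re (cnj (x $ i) * x $ j) \<ge>
      (if j = i then A $$ (i,i) * a i else 0) - s i j * (a i + a j) / 2" for i j
  proof (cases "j = i")
    case True
    have "Re (cnj (x $ i) * x $ i) = a i"
      unfolding a_def by (simp only: cmod_power2) (simp add: power2_eq_square)
    then show ?thesis using True by (simp add: s_def)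
  next
    case False
    have "\<bar>A $$ (i,j) * Re (cnj (x $ i) * x $ j)\<bar> \<le> \<bar>A $$ (i,j)\<bar> * ((a i + a j) / 2)"
      unfolding abs_mult a_def by (intro mult_left_mono abs_Re_cnj_mult_le) auto
    then show ?thesis using False by (simp add: s_def abs_le_iff)
  qed
  have s_swap: "(\<Sum>i<n. \<Sum>j<n. s i j * a j) = (\<Sum>i<n. \<Sum>j<n. s i j * a i)"
    by (subst sum.swap) (intro sum.cong refl, simp add: s_def sym)
  have "\<epsilon> * sq_norm x = (\<Sum>i<n. \<epsilon> * a i)"
    using x by (simp add: sq_norm_def a_def sum_distrib_left)
  also have "\<dots> \<le> (\<Sum>i<n. (A $$ (i,i) - (\<Sum>j<n. s i j)) * a i)"
    using dom by (intro sum_mono mult_right_mono) (auto simp: s_def a_def)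
  also have "\<dots> = (\<Sum>i<n. A $$ (i,i) * a i) - (\<Sum>i<n. \<Sum>j<n. s i j * a i) / 2
      - (\<Sum>i<n. \<Sum>j<n. s i j * a i) / 2"
    by (simp add: sum_subtractf sum_distrib_left sum_distrib_right algebra_simps)
  also have "\<dots> = (\<Sum>i<n. A $$ (i,i) * a i) - (\<Sum>i<n. \<Sum>j<n. s i j * a i) / 2
      - (\<Sum>i<n. \<Sum>j<n. s i j * a j) / 2"
    by (simp only: s_swap)
  also have "\<dots> = (\<Sum>i<n. \<Sum>j<n. (if j = i then A $$ (i,i) * a i else 0) - s i j * (a i + a j) / 2)"
    by (simp add: sum_subtractf sum.distrib sum_divide_distrib sum_distrib_left algebra_simps add_divide_distrib)
  also have "\<dots> \<le> (\<Sum>i<n. \<Sum>j<n. A $$ (i,j) * Re (cnj (x $ i) * x $ j))"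
    by (intro sum_mono term_bound)
  also have "\<dots> = Re (herm_form (cmat A) x)"
    unfolding herm_form_cmat[OF A x] by simp
  finally show ?thesis .
qed

lemma diag_dominant_eigenvalue:
  assumes A: "A \<in> carrier_mat n n" and sym: "\<And>i j. i < n \<Longrightarrow> j < n \<Longrightarrow> A $$ (i,j) = A $$ (j,i)"
    and dom: "\<And>i. i < n \<Longrightarrow> A $$ (i,i) - (\<Sum>j<n. if j = i then 0 else \<bar>A $$ (i,j)\<bar>) \<ge> \<epsilon>"
    and p: "eigenvalue (cmat A) p"
  shows "Im p = 0" and "Re p \<ge> \<epsilon>"
proof -
  obtain x where x: "x \<in> carrier_vec n" "x \<noteq> 0\<^sub>v n" "cmat A *\<^sub>v x = p \<cdot>\<^sub>v x"
    using p A unfolding eigenvalue_def eigenvector_def by auto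
  have hf: "herm_form (cmat A) x = p * of_real (sq_norm x)"
    by (rule herm_form_eigenvector[OF x(3)])
  have pos: "sq_norm x > 0" by (rule sq_norm_pos[OF x(1,2)])
  show "Im p = 0"
    using herm_form_symmetric_real[OF A sym x(1)] pos unfolding hf by simp
  show "Re p \<ge> \<epsilon>"
    using herm_form_diag_dominant[OF A sym dom x(1)] pos unfolding hf by simp
qed

lemma det_tendsto:
  fixes M :: "'b \<Rightarrow> complex mat"
  assumes M: "\<And>x. M x \<in> carrier_mat n n" and M0: "M0 \<in> carrier_mat n n"
    and lim: "\<And>i j. i < n \<Longrightarrow> j < n \<Longrightarrow> ((\<lambda>x. M x $$ (i,j)) \<longlongrightarrow> M0 $$ (i,j)) F"
  shows "((\<lambda>x. det (M x)) \<longlongrightarrow> det M0) F"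
proof -
  have "(\<lambda>x. det (M x)) = (\<lambda>x. \<Sum>p\<in>{p. p permutes {0..<n}}. signof p * (\<Prod>i = 0..<n. M x $$ (i, p i)))"
    using det_def'[OF M] by auto
  moreover have "((\<lambda>x. \<Sum>p\<in>{p. p permutes {0..<n}}. signof p * (\<Prod>i = 0..<n. M x $$ (i, p i)))
      \<longlongrightarrow> det M0) F"
    unfolding det_def'[OF M0]
  proof (intro tendsto_sum tendsto_mult tendsto_const tendsto_prod)
    fix p i assume "p \<in> {p. p permutes {0..<n}}" and i: "i \<in> {0..<n}"
    then have "p i < n" using permutes_in_image[of p "{0..<n}" i] by auto
    then show "((\<lambda>x. M x $$ (i, p i)) \<longlongrightarrow> M0 $$ (i, p i)) F" using lim i by auto
  qed
  ultimately show ?thesis by simp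
qed

lemma prod_linear_factors_lower_bound:
  assumes "\<forall>a\<in>set as. Re a \<le> 0" and "Re z \<ge> 0"
  shows "cmod (poly (\<Prod>a\<leftarrow>as. [:- a, 1:]) z) \<ge> Re z ^ length as"
  using assms(1)
proof (induct as)
  case (Cons a as)
  have "Re z \<le> cmod (z - a)"
    using Cons.prems abs_Re_le_cmod[of "z - a"] by (simp, linarith)
  then have "Re z * Re z ^ length as \<le> cmod (z - a) * cmod (poly (\<Prod>a\<leftarrow>as. [:- a, 1:]) z)"
    using Cons assms(2) by (intro mult_mono) auto
  then show ?case by (simp add: norm_mult[symmetric] left_diff_distrib)
qed simp

text \<open>Determinant of a companion-type block matrix; transposing puts the commuting block \<open>-I\<close>
  into the position required by the Schur-complement formula.\<close>

lemma det_companion_block: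
  fixes K D :: "'a :: idom mat"
  assumes K: "K \<in> carrier_mat n n" and D: "D \<in> carrier_mat n n"
  shows "det (four_block_mat (z \<cdot>\<^sub>m 1\<^sub>m n) (- 1\<^sub>m n) (- K) D) = det (z \<cdot>\<^sub>m D - K)"
proof -
  let ?M = "four_block_mat (z \<cdot>\<^sub>m 1\<^sub>m n) (- 1\<^sub>m n) (- K) D"
  have "det ?M = det (transpose_mat ?M)"
    using K D by (intro det_transpose[symmetric, of _ "n + n"]) auto
  also have "transpose_mat ?M = four_block_mat (z \<cdot>\<^sub>m 1\<^sub>m n) (- transpose_mat K) (- 1\<^sub>m n) (transpose_mat D)"
    using K D by (subst transpose_four_block_mat) auto
  also have "det \<dots> = det ((z \<cdot>\<^sub>m 1\<^sub>m n) * transpose_mat D - (- transpose_mat K) * (- 1\<^sub>m n))"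
    using K D by (intro det_four_block_mat) auto
  also have "(z \<cdot>\<^sub>m 1\<^sub>m n) * transpose_mat D - (- transpose_mat K) * (- 1\<^sub>m n) = transpose_mat (z \<cdot>\<^sub>m D - K)"
    using K D by (intro eq_matI) auto
  also have "det \<dots> = det (z \<cdot>\<^sub>m D - K)"
    using K D by (intro det_transpose) auto
  finally show ?thesis .
qed

lemma smult_mat_mult_vec:
  assumes "B \<in> carrier_mat nr n" and "x \<in> carrier_vec n"
  shows "(c \<cdot>\<^sub>m B) *\<^sub>v x = (c :: 'a :: comm_ring_1) \<cdot>\<^sub>v (B *\<^sub>v x)"
  using assms by (intro eq_vecI) (auto simp: scalar_prod_def sum_distrib_left algebra_simps)

lemma mult_vec_affine:
  assumes A: "A \<in> carrier_mat n n" and x: "x \<in> carrier_vec n"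
  shows "(\<alpha> \<cdot>\<^sub>m 1\<^sub>m n + \<beta> \<cdot>\<^sub>m A) *\<^sub>v x = \<alpha> \<cdot>\<^sub>v x + (\<beta> :: 'a :: comm_ring_1) \<cdot>\<^sub>v (A *\<^sub>v x)"
proof -
  have "(\<alpha> \<cdot>\<^sub>m 1\<^sub>m n + \<beta> \<cdot>\<^sub>m A) *\<^sub>v x = (\<alpha> \<cdot>\<^sub>m 1\<^sub>m n) *\<^sub>v x + (\<beta> \<cdot>\<^sub>m A) *\<^sub>v x"
    using A x by (intro add_mult_distrib_mat_vec) auto
  then show ?thesis
    using A x by (simp add: smult_mat_mult_vec[OF one_carrier_mat] smult_mat_mult_vec[OF A])
qed

section \<open>Weighted path Laplacians\<close>

text \<open>\<open>path_lap n c\<close> is the matrix of \<open>\<Sum>\<^sub>l\<^sub>=\<^sub>0\<^sup>n c\<^sub>l (x\<^sub>l - x\<^sub>l\<^sub>-\<^sub>1)\<^sup>2\<close> with \<open>x\<^sub>-\<^sub>1 = x\<^sub>n = 0\<close>: the Laplacian of a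
  path with weights \<open>c\<close> and Dirichlet ends.  It appears as the long-wave limit of the model.\<close>

definition path_lap :: "nat \<Rightarrow> (nat \<Rightarrow> 'a :: field) \<Rightarrow> 'a mat" where
  "path_lap n c = mat n n (\<lambda>(i,j).
      if i = j then c i + c (Suc i)
      else if j = Suc i then - c (Suc i)
      else if i = Suc j then - c (Suc j)
      else 0)"

definition pad :: "nat \<Rightarrow> 'a :: zero vec \<Rightarrow> nat \<Rightarrow> 'a" where
  "pad n x j = (if j < n then x $ j else 0)"

definition jump :: "nat \<Rightarrow> 'a :: ab_group_add vec \<Rightarrow> nat \<Rightarrow> 'a" where
  "jump n x j = pad n x j - (if j = 0 then 0 else pad n x (j - 1))"

lemma path_lap_carrier [simp]: "path_lap n c \<in> carrier_mat n n"
  unfolding path_lap_def by simp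

lemma path_lap_dim [simp]: "dim_row (path_lap n c) = n" "dim_col (path_lap n c) = n"
  unfolding path_lap_def by simp_all

lemma path_lap_mult_vec:
  assumes x: "x \<in> carrier_vec n" and i: "i < n"
  shows "(path_lap n c *\<^sub>v x) $ i = c i * jump n x i - c (Suc i) * jump n x (Suc i)"
proof -
  have "(path_lap n c *\<^sub>v x) $ i = (\<Sum>j<n. path_lap n c $$ (i,j) * x $ j)"
    using x i by (simp add: mult_mat_vec_def scalar_prod_def lessThan_atLeast0 path_lap_def)
  also have "\<dots> = (\<Sum>j<n. (if j = i then (c i + c (Suc i)) * x $ i else 0)
      + (if j = Suc i then - c (Suc i) * x $ j else 0)
      + (if j = i - 1 \<and> i \<noteq> 0 then - c i * x $ j else 0))"
    using i by (intro sum.cong refl) (auto simp: path_lap_def)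
  also have "\<dots> = (c i + c (Suc i)) * x $ i - c (Suc i) * pad n x (Suc i)
      - c i * (if i = 0 then 0 else x $ (i - 1))"
    using i by (simp add: sum.distrib pad_def)
  also have "\<dots> = c i * jump n x i - c (Suc i) * jump n x (Suc i)"
    using i by (simp add: jump_def pad_def algebra_simps)
  finally show ?thesis .
qed

lemma pad_sum_jumps: "m \<le> n \<Longrightarrow> pad n x m = (\<Sum>l\<le>m. jump n x l)"
  by (induct m) (simp_all add: jump_def)

lemma path_lap_kernel_iff:
  assumes x: "x \<in> carrier_vec n"
  shows "path_lap n c *\<^sub>v x = 0\<^sub>v n \<longleftrightarrow> (\<forall>l\<le>n. c l * jump n x l = c 0 * jump n x 0)"
proof
  assume K: "path_lap n c *\<^sub>v x = 0\<^sub>v n"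
  have step: "c (Suc l) * jump n x (Suc l) = c l * jump n x l" if "l < n" for l
    using arg_cong[OF K, of "\<lambda>v. v $ l"] path_lap_mult_vec[OF x that] that by simp
  show "\<forall>l\<le>n. c l * jump n x l = c 0 * jump n x 0"
  proof (intro allI impI)
    fix l assume "l \<le> n"
    then show "c l * jump n x l = c 0 * jump n x 0"
      by (induct l) (simp_all add: step)
  qed
next
  assume const: "\<forall>l\<le>n. c l * jump n x l = c 0 * jump n x 0"
  have "(path_lap n c *\<^sub>v x) $ i = 0" if "i < n" for i
    using const[rule_format, of i] const[rule_format, of "Suc i"] that
    by (simp add: path_lap_mult_vec[OF x that])
  then show "path_lap n c *\<^sub>v x = 0\<^sub>v n"
    by (intro eq_vecI) simp_all
qed

text \<open>A kernel vector has jumps proportional to \<open>1/c\<^sub>l\<close>; as the jumps sum to \<open>x\<^sub>n = 0\<close>, the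
  reciprocals of the weights must sum to zero.\<close>

lemma path_lap_singular_sum_zero:
  assumes c: "\<And>l. l \<le> n \<Longrightarrow> c l \<noteq> 0" and singular: "det (path_lap n c) = 0"
  shows "(\<Sum>l\<le>n. 1 / c l) = 0"
proof -
  obtain x where x: "x \<in> carrier_vec n" "x \<noteq> 0\<^sub>v n" "path_lap n c *\<^sub>v x = 0\<^sub>v n"
    using singular det_0_iff_vec_prod_zero[OF path_lap_carrier] by blast
  define J where "J = c 0 * jump n x 0"
  have jump: "jump n x l = J / c l" if "l \<le> n" for l
  proof -
    have "c l * jump n x l = J"
      using path_lap_kernel_iff[OF x(1)] x(3) that unfolding J_def by blast
    then show ?thesis using c[OF that] by (simp add: field_simps)
  qed
  have "J * (\<Sum>l\<le>n. 1 / c l) = pad n x n"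
    by (simp add: pad_sum_jumps sum_distrib_left jump)
  then have sum_zero_or: "J = 0 \<or> (\<Sum>l\<le>n. 1 / c l) = 0"
    by (simp add: pad_def)
  have "J \<noteq> 0"
  proof
    assume "J = 0"
    then have "pad n x i = 0" if "i < n" for i
      using that by (simp add: pad_sum_jumps jump)
    then have "x = 0\<^sub>v n"
      using x(1) by (intro eq_vecI) (auto simp: pad_def)
    with x(2) show False by simp
  qed
  with sum_zero_or show ?thesis by simp
qed

text \<open>Conversely the partial sums of the reciprocals form a kernel vector.\<close>

lemma path_lap_singular_if_sum_zero:
  assumes n: "n \<ge> 1" and c: "\<And>l. l \<le> n \<Longrightarrow> c l \<noteq> 0" and sum0: "(\<Sum>l\<le>n. 1 / c l) = 0"
  shows "det (path_lap n c) = 0"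
proof -
  define x where "x = vec n (\<lambda>i. \<Sum>l\<le>i. 1 / c l)"
  have x: "x \<in> carrier_vec n" unfolding x_def by simp
  have jump: "jump n x l = 1 / c l" if l: "l \<le> n" for l
  proof (cases "l < n")
    case True
    then show ?thesis by (cases l) (simp_all add: jump_def pad_def x_def)
  next
    case False
    then obtain n' where n': "n = Suc n'" "l = n" using n l by (cases n) auto
    have "(\<Sum>l\<le>n. 1 / c l) = (\<Sum>l\<le>n'. 1 / c l) + 1 / c n" using n' by simp
    then show ?thesis using sum0 n' by (simp add: jump_def pad_def x_def) (metis add_eq_0_iff)
  qed
  have "path_lap n c *\<^sub>v x = 0\<^sub>v n"
    unfolding path_lap_kernel_iff[OF x] using c jump by simp
  moreover have "x \<noteq> 0\<^sub>v n"
  proof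
    assume "x = 0\<^sub>v n"
    then have "x $ 0 = 0" using n by simp
    then show False using c[of 0] n by (simp add: x_def)
  qed
  ultimately show ?thesis
    using det_0_iff_vec_prod_zero[OF path_lap_carrier] x by blast
qed

lemma path_lap_singular_at_root:
  fixes d v :: "nat \<Rightarrow> real"
  assumes n: "n \<ge> 1" and d: "\<And>l. l \<le> n \<Longrightarrow> d l > 0" and \<nu>: "Im \<nu> \<noteq> 0"
    and root: "(\<Sum>l\<le>n. of_real (d l) / (\<nu> + of_real (v l))\<^sup>2) = 0"
  shows "det (path_lap n (\<lambda>l. - (\<nu> + of_real (v l))\<^sup>2 / of_real (d l))) = 0"
proof (rule path_lap_singular_if_sum_zero[OF n])
  have "\<nu> + of_real (v l) \<noteq> 0" for l
  proof
    assume "\<nu> + of_real (v l) = 0"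
    then have "Im (\<nu> + of_real (v l)) = 0" by simp
    with \<nu> show False by simp
  qed
  then show "- (\<nu> + of_real (v l))\<^sup>2 / of_real (d l) \<noteq> 0" if "l \<le> n" for l
    using d[OF that] by simp
  show "(\<Sum>l\<le>n. 1 / (- (\<nu> + of_real (v l))\<^sup>2 / of_real (d l))) = 0"
    using root by (simp add: sum_negf)
qed

lemma path_lap_regular:
  fixes d :: "nat \<Rightarrow> real"
  assumes d: "\<And>l. l \<le> n \<Longrightarrow> d l > 0"
  shows "det (path_lap n (\<lambda>l. 1 / complex_of_real (d l))) \<noteq> 0"
proof
  assume "det (path_lap n (\<lambda>l. 1 / complex_of_real (d l))) = 0"
  moreover have "1 / complex_of_real (d l) \<noteq> 0" if "l \<le> n" for l using d[OF that] by simp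
  ultimately have "(\<Sum>l\<le>n. 1 / (1 / complex_of_real (d l))) = 0"
    by (intro path_lap_singular_sum_zero) auto
  moreover have "(\<Sum>l\<le>n. d l) > 0" using d by (intro sum_pos) auto
  ultimately show False by (simp flip: of_real_sum)
qed

section \<open>A non-real root of a sum of inverse squares\<close>

text \<open>Clearing denominators in \<open>\<Sum>\<^sub>w\<^sub>\<in>\<^sub>W D\<^sub>w / (\<nu> + w)\<^sup>2\<close> gives this polynomial.\<close>

definition sum_inv_sq_poly :: "real set \<Rightarrow> (real \<Rightarrow> real) \<Rightarrow> complex poly" where
  "sum_inv_sq_poly W D = (\<Sum>w\<in>W. [:of_real (D w):] * (\<Prod>w'\<in>W - {w}. [:of_real w', 1:]\<^sup>2))"

lemma poly_sum_inv_sq_poly: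
  "poly (sum_inv_sq_poly W D) z = (\<Sum>w\<in>W. of_real (D w) * (\<Prod>w'\<in>W - {w}. (z + of_real w')\<^sup>2))"
  unfolding sum_inv_sq_poly_def by (simp add: poly_sum poly_prod algebra_simps)

lemma sum_inv_sq_poly_real_pos:
  assumes W: "finite W" "W \<noteq> {}" and D: "\<And>w. w \<in> W \<Longrightarrow> D w > 0"
  shows "poly (sum_inv_sq_poly W D) (of_real y) = of_real (\<Sum>w\<in>W. D w * (\<Prod>w'\<in>W - {w}. (y + w')\<^sup>2))"
    and "(\<Sum>w\<in>W. D w * (\<Prod>w'\<in>W - {w}. (y + w')\<^sup>2)) > 0"
proof -
  show "poly (sum_inv_sq_poly W D) (of_real y) = of_real (\<Sum>w\<in>W. D w * (\<Prod>w'\<in>W - {w}. (y + w')\<^sup>2))"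
    unfolding poly_sum_inv_sq_poly by simp
  obtain w0 where w0: "w0 \<in> W" "\<And>w'. w' \<in> W - {w0} \<Longrightarrow> y + w' \<noteq> 0"
  proof (cases "- y \<in> W")
    case True then show ?thesis by (intro that[of "- y"]) auto
  next
    case False
    obtain w where "w \<in> W" using W(2) by blast
    then show ?thesis using False by (intro that[of w]) (auto simp: add_eq_0_iff)
  qed
  have "0 < D w0 * (\<Prod>w'\<in>W - {w0}. (y + w')\<^sup>2)"
    using D[OF w0(1)] w0(2) W(1) by (intro mult_pos_pos prod_pos) auto
  also have "\<dots> \<le> (\<Sum>w\<in>W. D w * (\<Prod>w'\<in>W - {w}. (y + w')\<^sup>2))"
    using w0(1) W(1) D by (intro member_le_sum mult_nonneg_nonneg prod_nonneg) (auto intro: less_imp_le)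
  finally show "(\<Sum>w\<in>W. D w * (\<Prod>w'\<in>W - {w}. (y + w')\<^sup>2)) > 0" .
qed

text \<open>Each summand is monic of degree \<open>2(|W| - 1)\<close> up to the factor \<open>D\<^sub>w\<close>, so the polynomial
  is not constant once \<open>W\<close> has two points.\<close>

lemma sum_inv_sq_poly_degree:
  assumes W: "finite W" "card W \<ge> 2" and D: "\<And>w. w \<in> W \<Longrightarrow> D w > 0"
  shows "degree (sum_inv_sq_poly W D) \<ge> 2"
proof -
  define N where "N = 2 * (card W - 1)"
  have factor: "degree ([:of_real a, 1:]\<^sup>2 :: complex poly) = 2"
      "coeff ([:of_real a, 1:]\<^sup>2 :: complex poly) 2 = 1" for a
  proof -
    show deg: "degree ([:of_real a, 1:]\<^sup>2 :: complex poly) = 2" by (simp add: degree_power_eq)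
    have "lead_coeff ([:of_real a, 1:]\<^sup>2 :: complex poly) = 1" by (simp add: lead_coeff_power)
    then show "coeff ([:of_real a, 1:]\<^sup>2 :: complex poly) 2 = 1" by (simp only: deg)
  qed
  have prod: "coeff (\<Prod>w'\<in>W - {w}. [:of_real w', 1:]\<^sup>2 :: complex poly) N = 1" if w: "w \<in> W" for w
  proof -
    let ?f = "\<lambda>w'. [:of_real w', 1:]\<^sup>2 :: complex poly"
    have "0 \<notin> (degree \<circ> ?f) ` (W - {w})" by (auto simp: factor)
    from degree_prod_sum_monic[OF _ this] W(1)
    have "coeff (prod ?f (W - {w})) (sum (degree \<circ> ?f) (W - {w})) = 1"
      by (simp add: factor)
    moreover have "sum (degree \<circ> ?f) (W - {w}) = N"
      using W w by (simp add: factor N_def card_Diff_singleton)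
    ultimately show ?thesis by simp
  qed
  have "coeff (sum_inv_sq_poly W D) N = of_real (\<Sum>w\<in>W. D w)"
    unfolding sum_inv_sq_poly_def by (simp add: coeff_sum prod)
  moreover have "(\<Sum>w\<in>W. D w) > 0"
    using W D by (intro sum_pos) auto
  ultimately have "coeff (sum_inv_sq_poly W D) N \<noteq> 0"
    by (metis of_real_eq_0_iff order_less_irrefl)
  then have "N \<le> degree (sum_inv_sq_poly W D)"
    by (rule le_degree)
  then show ?thesis using W(2) unfolding N_def by linarith
qed

text \<open>By the fundamental theorem of algebra the sum has a non-real zero, which may be taken in
  the lower half plane since the coefficients are real.\<close>

lemma nonreal_root_sum_inv_sq:
  assumes W: "finite W" "card W \<ge> 2" and D_pos: "\<And>w. w \<in> W \<Longrightarrow> D w > 0"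
  shows "\<exists>\<nu>. Im \<nu> < 0 \<and> (\<Sum>w\<in>W. of_real (D w) / (\<nu> + of_real w)\<^sup>2) = 0"
proof -
  let ?G = "sum_inv_sq_poly W D"
  have W_ne: "W \<noteq> {}" using W by auto
  have "\<not> constant (poly ?G)"
    using sum_inv_sq_poly_degree[of W D] W D_pos by (simp add: constant_degree)
  then obtain \<mu> where root: "poly ?G \<mu> = 0"
    using fundamental_theorem_of_algebra by blast
  have "Im \<mu> \<noteq> 0"
  proof
    assume "Im \<mu> = 0"
    then have "\<mu> = of_real (Re \<mu>)" by (simp add: complex_eq_iff)
    then show False
      using root sum_inv_sq_poly_real_pos[of W D "Re \<mu>"] W(1) W_ne D_pos by (metis of_real_eq_0_iff less_irrefl)
  qed
  then have nz: "\<mu> + of_real w \<noteq> 0" for w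
    by (metis complex_is_Real_iff Reals_minus_iff Reals_of_real eq_neg_iff_add_eq_0)
  have "(\<Sum>w\<in>W. of_real (D w) / (\<mu> + of_real w)\<^sup>2) * (\<Prod>w'\<in>W. (\<mu> + of_real w')\<^sup>2) = poly ?G \<mu>"
    unfolding poly_sum_inv_sq_poly sum_distrib_right
    using W(1) nz by (intro sum.cong refl) (simp add: prod.remove)
  then have sum0: "(\<Sum>w\<in>W. of_real (D w) / (\<mu> + of_real w)\<^sup>2) = 0"
    using root nz W(1) by simp
  show ?thesis
  proof (cases "Im \<mu> < 0")
    case True then show ?thesis using sum0 by blast
  next
    case False
    have "(\<Sum>w\<in>W. of_real (D w) / (cnj \<mu> + of_real w)\<^sup>2) = cnj (\<Sum>w\<in>W. of_real (D w) / (\<mu> + of_real w)\<^sup>2)"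
      by simp
    then show ?thesis using sum0 False \<open>Im \<mu> \<noteq> 0\<close> by (intro exI[of _ "cnj \<mu>"]) simp
  qed
qed

text \<open>The same for an indexed family with at least two distinct values, grouping equal values.\<close>

lemma projection_root:
  fixes d v :: "nat \<Rightarrow> real"
  assumes d: "\<And>l. l \<le> n \<Longrightarrow> d l > 0" and ij: "i0 \<le> n" "j0 \<le> n" "v i0 \<noteq> v j0"
  shows "\<exists>\<nu>. Im \<nu> < 0 \<and> (\<Sum>l\<le>n. of_real (d l) / (\<nu> + of_real (v l))\<^sup>2) = 0"
proof -
  define W where "W = v ` {..n}"
  define D where "D w = (\<Sum>l\<in>{l\<in>{..n}. v l = w}. d l)" for w
  have W: "finite W" unfolding W_def by simp
  have "card {v i0, v j0} \<le> card W"
    using ij W unfolding W_def by (intro card_mono) auto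
  then have card_W: "card W \<ge> 2" using ij(3) by simp
  have D_pos: "D w > 0" if w: "w \<in> W" for w
  proof -
    obtain l where l: "l \<le> n" "v l = w" using w unfolding W_def by auto
    have "d l \<le> D w"
      unfolding D_def using l d by (intro member_le_sum) (auto intro: less_imp_le)
    then show ?thesis using d[OF l(1)] by simp
  qed
  obtain \<nu> where \<nu>: "Im \<nu> < 0" "(\<Sum>w\<in>W. of_real (D w) / (\<nu> + of_real w)\<^sup>2) = 0"
    using nonreal_root_sum_inv_sq[of W D] W card_W D_pos by blast
  have "(\<Sum>l\<le>n. of_real (d l) / (\<nu> + of_real (v l))\<^sup>2)
      = (\<Sum>w\<in>W. \<Sum>l\<in>{l\<in>{..n}. v l = w}. of_real (d l) / (\<nu> + of_real (v l))\<^sup>2)"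
    unfolding W_def by (rule sum.image_gen) simp
  also have "\<dots> = (\<Sum>w\<in>W. of_real (D w) / (\<nu> + of_real w)\<^sup>2)"
    unfolding D_def by (auto simp: sum_divide_distrib intro!: sum.cong)
  finally show ?thesis using \<nu> by auto
qed

section \<open>The model matrices\<close>

lemma dh_pos: "\<forall>i\<le>n. h i < h (Suc i) \<Longrightarrow> l \<le> n \<Longrightarrow> dh h l > 0"
  unfolding dh_def by auto

text \<open>The edge gap \<open>(coth - csch)(\<rho> \<Delta>h\<^sub>l) / \<rho> = tanh(\<rho> \<Delta>h\<^sub>l / 2) / \<rho>\<close> is the diagonal-dominance
  margin contributed by layer \<open>l\<close>.\<close>

definition gap :: "(nat \<Rightarrow> real) \<Rightarrow> real \<Rightarrow> nat \<Rightarrow> real" where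
  "gap h \<rho> l = (coth (\<rho> * dh h l) - csch (\<rho> * dh h l)) / \<rho>"

lemma gap_nonneg:
  assumes "\<rho> > 0" and "dh h l > 0" shows "gap h \<rho> l \<ge> 0"
proof -
  have "csch (\<rho> * dh h l) \<le> coth (\<rho> * dh h l)"
    using assms cosh_real_ge_1[of "\<rho> * dh h l"] unfolding csch_def coth_def
    by (simp add: divide_right_mono)
  then show ?thesis unfolding gap_def using assms by simp
qed

lemma P_mat_carrier [simp]: "P_mat n h k \<in> carrier_mat n n"
  unfolding P_mat_def tri_mat_def by simp

lemma P_mat_dim [simp]: "dim_row (P_mat n h k) = n" "dim_col (P_mat n h k) = n"
  unfolding P_mat_def tri_mat_def by simp_all

lemma P_mat_entry:
  "i < n \<Longrightarrow> j < n \<Longrightarrow> P_mat n h k $$ (i,j) =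
   (if i = j then 1 + (coth (vnorm k * dh h i) + coth (vnorm k * dh h (Suc i))) / vnorm k
    else if j = Suc i then - csch (vnorm k * dh h (Suc i)) / vnorm k
    else if i = Suc j then - csch (vnorm k * dh h (Suc j)) / vnorm k else 0)"
  unfolding P_mat_def tri_mat_def by simp

lemma P_mat_sym: "i < n \<Longrightarrow> j < n \<Longrightarrow> P_mat n h k $$ (i,j) = P_mat n h k $$ (j,i)"
  by (auto simp: P_mat_entry)

lemma P_mat_diag_dominant:
  assumes h: "\<forall>i\<le>n. h i < h (Suc i)" and \<rho>: "vnorm k > 0"
    and c: "\<And>l. l \<le> n \<Longrightarrow> gap h (vnorm k) l \<ge> c" and i: "i < n"
  shows "P_mat n h k $$ (i,i) - (\<Sum>j<n. if j = i then 0 else \<bar>P_mat n h k $$ (i,j)\<bar>) \<ge> 1 + 2 * c"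
proof -
  define s where "s l = csch (vnorm k * dh h l) / vnorm k" for l
  have s_pos: "s l \<ge> 0" if "l \<le> n" for l
    using dh_pos[OF h that] \<rho> unfolding s_def csch_def by simp
  have "(\<Sum>j<n. if j = i then 0 else \<bar>P_mat n h k $$ (i,j)\<bar>)
      \<le> (\<Sum>j<n. (if j = Suc i then s (Suc i) else 0) + (if j = i - 1 \<and> i \<noteq> 0 then s i else 0))"
    using i s_pos[of i] s_pos[of "Suc i"]
    by (intro sum_mono) (auto simp: P_mat_entry s_def)
  also have "\<dots> \<le> s (Suc i) + s i"
    using i s_pos[of i] s_pos[of "Suc i"] by (cases i) (simp_all add: sum.distrib)
  finally have "(\<Sum>j<n. if j = i then 0 else \<bar>P_mat n h k $$ (i,j)\<bar>) \<le> s (Suc i) + s i" .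
  moreover have "P_mat n h k $$ (i,i) = 1 + (gap h (vnorm k) i + s i) + (gap h (vnorm k) (Suc i) + s (Suc i))"
    using i \<rho> by (simp add: P_mat_entry gap_def s_def field_simps)
  moreover have "gap h (vnorm k) i \<ge> c" "gap h (vnorm k) (Suc i) \<ge> c"
    using c i by auto
  ultimately show ?thesis by linarith
qed

lemma P_mat_eigenvalue:
  assumes h: "\<forall>i\<le>n. h i < h (Suc i)" and \<rho>: "vnorm k > 0"
    and c: "\<And>l. l \<le> n \<Longrightarrow> gap h (vnorm k) l \<ge> c"
    and p: "eigenvalue (cmat (P_mat n h k)) p"
  shows "Im p = 0" and "Re p \<ge> 1 + 2 * c"
  using diag_dominant_eigenvalue[OF P_mat_carrier P_mat_sym P_mat_diag_dominant[OF h \<rho> c] p] by auto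

lemma P_mat_eigenvalue_ge_1:
  assumes h: "\<forall>i\<le>n. h i < h (Suc i)" and \<rho>: "vnorm k > 0"
    and p: "eigenvalue (cmat (P_mat n h k)) p"
  shows "Im p = 0" and "Re p \<ge> 1"
  using P_mat_eigenvalue[OF h \<rho> _ p, of 0] gap_nonneg[OF \<rho> dh_pos[OF h]] by auto

lemma det_P_mat_nonzero:
  assumes h: "\<forall>i\<le>n. h i < h (Suc i)" and \<rho>: "vnorm k > 0"
  shows "det (cmat (P_mat n h k)) \<noteq> 0"
proof
  assume "det (cmat (P_mat n h k)) = 0"
  then obtain v where "v \<in> carrier_vec n" "v \<noteq> 0\<^sub>v n" "cmat (P_mat n h k) *\<^sub>v v = 0\<^sub>v n"
    using det_0_iff_vec_prod_zero[of "cmat (P_mat n h k)" n] by auto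
  then have "eigenvalue (cmat (P_mat n h k)) 0"
    unfolding eigenvalue_def eigenvector_def by (intro exI[of _ v]) auto
  then show False using P_mat_eigenvalue_ge_1(2)[OF h \<rho>] by fastforce
qed

text \<open>The tridiagonal coth/csch pattern with complex edge weights, and the dispersion matrix
  \<open>L(z) = (z\<^sup>2 + |k|\<^sup>4) I + T((z + i k\<cdot>U\<^sub>l)\<^sup>2)\<close>.\<close>

definition ctri :: "nat \<Rightarrow> real \<Rightarrow> (nat \<Rightarrow> real) \<Rightarrow> (nat \<Rightarrow> complex) \<Rightarrow> complex mat" where
  "ctri n \<rho> h a = mat n n (\<lambda>(i,j).
      if i = j then (a i * of_real (coth (\<rho> * dh h i)) + a (Suc i) * of_real (coth (\<rho> * dh h (Suc i)))) / of_real \<rho>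
      else if j = Suc i then - a (Suc i) * of_real (csch (\<rho> * dh h (Suc i))) / of_real \<rho>
      else if i = Suc j then - a (Suc j) * of_real (csch (\<rho> * dh h (Suc j))) / of_real \<rho>
      else 0)"

lemma ctri_carrier [simp]: "ctri n \<rho> h a \<in> carrier_mat n n"
  unfolding ctri_def by simp

lemma ctri_dim [simp]: "dim_row (ctri n \<rho> h a) = n" "dim_col (ctri n \<rho> h a) = n"
  unfolding ctri_def by simp_all

lemma ctri_cong: "(\<And>l. l \<le> n \<Longrightarrow> a l = b l) \<Longrightarrow> ctri n \<rho> h a = ctri n \<rho> h b"
  unfolding ctri_def by (intro eq_matI) auto

definition disp_mat :: "nat \<Rightarrow> (nat \<Rightarrow> real) \<Rightarrow> (nat \<Rightarrow> real vec) \<Rightarrow> real vec \<Rightarrow> complex \<Rightarrow> complex mat" where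
  "disp_mat n h U k z = (z\<^sup>2 + of_real (vnorm k ^ 4)) \<cdot>\<^sub>m 1\<^sub>m n
      + ctri n (vnorm k) h (\<lambda>l. (z + \<i> * of_real (k \<bullet> U l))\<^sup>2)"

lemma disp_mat_carrier [simp]: "disp_mat n h U k z \<in> carrier_mat n n"
  unfolding disp_mat_def by simp

lemma tri_mat_dim [simp]: "dim_row (tri_mat n \<rho> h a) = n" "dim_col (tri_mat n \<rho> h a) = n"
  unfolding tri_mat_def by simp_all

lemma Q_mat_carrier [simp]: "Q_mat n h U k \<in> carrier_mat n n"
  unfolding Q_mat_def tri_mat_def by simp

lemma R_mat_carrier [simp]: "R_mat n h U k \<in> carrier_mat n n"
  unfolding R_mat_def tri_mat_def by simp

lemma Q_mat_dim [simp]: "dim_row (Q_mat n h U k) = n" "dim_col (Q_mat n h U k) = n"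
  unfolding Q_mat_def by simp_all

lemma R_mat_dim [simp]: "dim_row (R_mat n h U k) = n" "dim_col (R_mat n h U k) = n"
  unfolding R_mat_def by simp_all

lemma disp_mat_expand:
  assumes "vnorm k \<noteq> 0"
  shows "disp_mat n h U k z = z \<cdot>\<^sub>m (z \<cdot>\<^sub>m cmat (P_mat n h k) + (2 * \<i>) \<cdot>\<^sub>m cmat (R_mat n h U k))
      - (cmat (Q_mat n h U k) - of_real (vnorm k ^ 4) \<cdot>\<^sub>m 1\<^sub>m n)"
  by (rule eq_matI)
    (use assms in \<open>auto simp: disp_mat_def ctri_def P_mat_def Q_mat_def R_mat_def tri_mat_def
        field_simps power2_eq_square\<close>)

lemma zN1_minus_N2:
  "z \<cdot>\<^sub>m N1_mat n h k - N2_mat n h U k = four_block_mat (z \<cdot>\<^sub>m 1\<^sub>m n) (- 1\<^sub>m n)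
     (- (cmat (Q_mat n h U k) - of_real (vnorm k ^ 4) \<cdot>\<^sub>m 1\<^sub>m n))
     (z \<cdot>\<^sub>m cmat (P_mat n h k) + (2 * \<i>) \<cdot>\<^sub>m cmat (R_mat n h U k))"
  by (rule eq_matI) (auto simp: N1_mat_def N2_mat_def)

lemma det_zN1_minus_N2:
  assumes "vnorm k \<noteq> 0"
  shows "det (z \<cdot>\<^sub>m N1_mat n h k - N2_mat n h U k) = det (disp_mat n h U k z)"
  unfolding zN1_minus_N2 disp_mat_expand[OF assms]
  by (rule det_companion_block) auto

section \<open>Eigenvalues of N and the dispersion matrix\<close>

lemma N1_mat_carrier [simp]: "N1_mat n h k \<in> carrier_mat (n + n) (n + n)"
  unfolding N1_mat_def by simp

lemma N2_mat_carrier [simp]: "N2_mat n h U k \<in> carrier_mat (n + n) (n + n)"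
  unfolding N2_mat_def by simp

lemma det_N1_mat: "det (N1_mat n h k) = det (cmat (P_mat n h k))"
  unfolding N1_mat_def by (subst det_four_block_mat_lower_left_zero[of _ n _ n]) auto

lemma N_mat_solves:
  assumes "det (cmat (P_mat n h k)) \<noteq> 0"
  shows "N_mat n h U k \<in> carrier_mat (n + n) (n + n)" and "N1_mat n h k * N_mat n h U k = N2_mat n h U k"
proof -
  let ?N1 = "N1_mat n h k"
  have "?N1 \<in> Units (ring_mat TYPE(complex) (n + n) ())"
    using assms det_N1_mat by (intro det_non_zero_imp_unit) auto
  then obtain B where B: "mat_inverse ?N1 = Some B"
    using mat_inverse(1)[OF N1_mat_carrier, where b = "()"] by (cases "mat_inverse ?N1") auto
  have B_props: "?N1 * B = 1\<^sub>m (n + n)" "B \<in> carrier_mat (n + n) (n + n)"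
    using mat_inverse(2)[OF N1_mat_carrier B] by auto
  have N: "N_mat n h U k = B * N2_mat n h U k"
    unfolding N_mat_def B by simp
  show "N_mat n h U k \<in> carrier_mat (n + n) (n + n)"
    unfolding N using B_props by simp
  show "?N1 * N_mat n h U k = N2_mat n h U k"
    unfolding N using assoc_mult_mat[OF N1_mat_carrier[of n h k] B_props(2) N2_mat_carrier[of n h U k]] B_props
    by (simp add: left_mult_one_mat[of _ "n + n" "n + n"])
qed

lemma char_poly_N_mat:
  assumes h: "\<forall>i\<le>n. h i < h (Suc i)" and \<rho>: "vnorm k > 0"
  shows "det (cmat (P_mat n h k)) * poly (char_poly (N_mat n h U k)) z = det (disp_mat n h U k z)"
proof -
  let ?N1 = "N1_mat n h k" and ?N = "N_mat n h U k"
  note P = det_P_mat_nonzero[OF h \<rho>]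
  note N = N_mat_solves[OF P, of U]
  have "poly (char_poly ?N) z = det (z \<cdot>\<^sub>m 1\<^sub>m (n + n) - ?N)"
    unfolding char_poly_matrix[OF N(1)] char_matrix_def
    using N(1) by (intro arg_cong[of _ _ det] eq_matI) auto
  moreover have "?N1 * (z \<cdot>\<^sub>m 1\<^sub>m (n + n) - ?N) = ?N1 * (z \<cdot>\<^sub>m 1\<^sub>m (n + n)) - ?N1 * ?N"
    using N(1) by (intro mult_minus_distrib_mat[OF N1_mat_carrier[of n h k]]) auto
  moreover have "?N1 * (z \<cdot>\<^sub>m 1\<^sub>m (n + n)) = z \<cdot>\<^sub>m ?N1"
    using mult_smult_distrib[OF N1_mat_carrier[of n h k] one_carrier_mat, where k = z]
    by (simp add: right_mult_one_mat[OF N1_mat_carrier])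
  moreover have "z \<cdot>\<^sub>m 1\<^sub>m (n + n) - ?N \<in> carrier_mat (n + n) (n + n)"
    using N(1) by (auto intro!: minus_carrier_mat)
  ultimately show ?thesis
    using det_mult[OF N1_mat_carrier[of n h k], of "z \<cdot>\<^sub>m 1\<^sub>m (n + n) - ?N"] N det_zN1_minus_N2 \<rho>
    by (simp add: det_N1_mat)
qed

lemma eigenvalue_N_mat_iff:
  assumes h: "\<forall>i\<le>n. h i < h (Suc i)" and \<rho>: "vnorm k > 0"
  shows "eigenvalue (N_mat n h U k) z \<longleftrightarrow> det (disp_mat n h U k z) = 0"
proof -
  note P = det_P_mat_nonzero[OF h \<rho>]
  have "eigenvalue (N_mat n h U k) z \<longleftrightarrow> poly (char_poly (N_mat n h U k)) z = 0"
    by (rule eigenvalue_root_char_poly[OF N_mat_solves(1)[OF P]])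
  also have "\<dots> \<longleftrightarrow> det (disp_mat n h U k z) = 0"
    using char_poly_N_mat[OF h \<rho>, of U z] P by (metis mult_eq_0_iff)
  finally show ?thesis .
qed

lemma disp_mat_det_lower_bound:
  assumes h: "\<forall>i\<le>n. h i < h (Suc i)" and \<rho>: "vnorm k > 0"
    and stable: "\<forall>w. eigenvalue (N_mat n h U k) w \<longrightarrow> Re w \<le> 0" and z: "Re z \<ge> 0"
  shows "cmod (det (disp_mat n h U k z)) \<ge> cmod (det (cmat (P_mat n h k))) * Re z ^ (2 * n)"
proof -
  note N = N_mat_solves(1)[OF det_P_mat_nonzero[OF h \<rho>], of U]
  obtain as where cp: "char_poly (N_mat n h U k) = (\<Prod>a\<leftarrow>as. [:- a, 1:])" and len: "length as = n + n"
    using char_poly_factorized[OF N] by blast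
  have "\<forall>a\<in>set as. Re a \<le> 0"
  proof
    fix a assume "a \<in> set as"
    then have "poly (char_poly (N_mat n h U k)) a = 0"
      unfolding cp poly_prod_list by (induct as) auto
    then show "Re a \<le> 0" using stable eigenvalue_root_char_poly[OF N] by blast
  qed
  from prod_linear_factors_lower_bound[OF this z]
  have "cmod (poly (char_poly (N_mat n h U k)) z) \<ge> Re z ^ (2 * n)"
    unfolding cp len by (simp add: mult_2)
  then show ?thesis
    unfolding char_poly_N_mat[OF h \<rho>, of U z, symmetric] norm_mult by (simp add: mult_left_mono)
qed

section \<open>Stability when the flow is orthogonal to the wave vector\<close>

lemma disp_mat_uniform:
  assumes "\<forall>l\<le>n. k \<bullet> U l = u"
  shows "disp_mat n h U k z = (z\<^sup>2 + of_real (vnorm k ^ 4) - (z + \<i> * of_real u)\<^sup>2) \<cdot>\<^sub>m 1\<^sub>m n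
      + (z + \<i> * of_real u)\<^sup>2 \<cdot>\<^sub>m cmat (P_mat n h k)"
  by (rule eq_matI)
    (use assms in \<open>auto simp: disp_mat_def ctri_def P_mat_def tri_mat_def field_simps\<close>)

lemma Re_zero_if_square_negative:
  fixes z :: complex
  assumes "z\<^sup>2 = - of_real a" and "a > 0"
  shows "Re z = 0"
proof -
  have "Re z * Im z = 0" "(Re z)\<^sup>2 - (Im z)\<^sup>2 < 0"
    using arg_cong[OF assms(1), of Im] arg_cong[OF assms(1), of Re] assms(2)
    by (auto simp: power2_eq_square)
  then show ?thesis by (auto simp: power2_eq_square)
qed

text \<open>For \<open>k\<cdot>U\<^sub>l = 0\<close>: \<open>L(z) x = 0\<close> makes \<open>-|k|\<^sup>4/z\<^sup>2\<close> an eigenvalue of \<open>P\<close>, hence positive,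
  so \<open>z\<^sup>2\<close> is negative real.\<close>

lemma stable_if_orthogonal:
  assumes h: "\<forall>i\<le>n. h i < h (Suc i)" and \<rho>: "vnorm k > 0" and U0: "\<forall>l\<le>n. k \<bullet> U l = 0"
    and z: "eigenvalue (N_mat n h U k) z"
  shows "Re z = 0"
proof -
  let ?P = "cmat (P_mat n h k)" and ?a = "vnorm k ^ 4"
  have "det (disp_mat n h U k z) = 0" using z eigenvalue_N_mat_iff[OF h \<rho>] by simp
  then obtain x where x: "x \<in> carrier_vec n" "x \<noteq> 0\<^sub>v n" "disp_mat n h U k z *\<^sub>v x = 0\<^sub>v n"
    using det_0_iff_vec_prod_zero[OF disp_mat_carrier] by blast
  have "disp_mat n h U k z = of_real ?a \<cdot>\<^sub>m 1\<^sub>m n + z\<^sup>2 \<cdot>\<^sub>m ?P"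
    using disp_mat_uniform[OF U0] by simp
  then have kernel_vec: "of_real ?a \<cdot>\<^sub>v x + z\<^sup>2 \<cdot>\<^sub>v (?P *\<^sub>v x) = 0\<^sub>v n"
    using x(3) mult_vec_affine[OF _ x(1)] by simp
  have kernel: "of_real ?a * x $ i + z\<^sup>2 * (?P *\<^sub>v x) $ i = 0" if "i < n" for i
    using arg_cong[OF kernel_vec, of "\<lambda>v. v $ i"] x(1) that by simp
  have "z \<noteq> 0"
  proof
    assume "z = 0"
    then have "x = 0\<^sub>v n"
      using kernel x(1) \<rho> by (intro eq_vecI) auto
    with x(2) show False by simp
  qed
  define p where "p = - of_real ?a / z\<^sup>2"
  have "?P *\<^sub>v x = p \<cdot>\<^sub>v x"
    using kernel x(1) \<open>z \<noteq> 0\<close> unfolding p_def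
    by (intro eq_vecI) (auto simp: field_simps eq_neg_iff_add_eq_0)
  then have "eigenvalue ?P p"
    using x(1,2) unfolding eigenvalue_def eigenvector_def by (intro exI[of _ x]) auto
  with P_mat_eigenvalue_ge_1[OF h \<rho>] have "Im p = 0" "Re p \<ge> 1" by auto
  then have "p = of_real (Re p)" "p \<noteq> 0" by (auto simp: complex_eq_iff)
  moreover have "z\<^sup>2 = - of_real ?a / p"
    using \<open>p \<noteq> 0\<close> \<open>z \<noteq> 0\<close> unfolding p_def by (simp add: field_simps)
  ultimately have "z\<^sup>2 = - of_real (?a / Re p)"
    by (metis minus_divide_left of_real_divide)
  moreover have "?a / Re p > 0" using \<rho> \<open>Re p \<ge> 1\<close> by simp
  ultimately show ?thesis by (rule Re_zero_if_square_negative)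
qed

lemma vnorm_pos:
  assumes e: "e \<in> carrier_vec m" "e \<noteq> 0\<^sub>v m"
  shows "vnorm e > 0"
proof -
  obtain i where i: "i < m" "e $ i \<noteq> 0" using e by (metis eq_vecI carrier_vecD index_zero_vec)
  have "(e $ i)\<^sup>2 \<le> (\<Sum>j<m. (e $ j)\<^sup>2)" using i by (intro member_le_sum) auto
  also have "\<dots> = e \<bullet> e"
    using e(1) by (simp add: scalar_prod_def power2_eq_square lessThan_atLeast0)
  finally have "e \<bullet> e > 0" using i by (smt (verit) zero_less_power2)
  then show ?thesis unfolding vnorm_def by simp
qed

lemma vnorm_sq: "vnorm e > 0 \<Longrightarrow> e \<bullet> e = (vnorm e)\<^sup>2"
  unfolding vnorm_def by simp

lemma scaled_direction:
  assumes e: "e \<in> carrier_vec m" "vnorm e > 0" and \<rho>: "\<rho> > 0"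
  defines "k \<equiv> (\<rho> / vnorm e) \<cdot>\<^sub>v e"
  shows "k \<in> carrier_vec m" and "vnorm k = \<rho>" and "k \<noteq> 0\<^sub>v m"
    and "\<And>w. w \<in> carrier_vec m \<Longrightarrow> k \<bullet> w = \<rho> * (e \<bullet> w / vnorm e)"
proof -
  show k: "k \<in> carrier_vec m" unfolding k_def using e by simp
  show kw: "\<And>w. w \<in> carrier_vec m \<Longrightarrow> k \<bullet> w = \<rho> * (e \<bullet> w / vnorm e)"
    unfolding k_def using e by simp
  have "k \<bullet> k = \<rho> * ((\<rho> / vnorm e) * (e \<bullet> e) / vnorm e)"
    using kw[OF k] e unfolding k_def by simp
  then have "k \<bullet> k = \<rho>\<^sup>2"
    using vnorm_sq[OF e(2)] e(2) by (simp add: power2_eq_square field_simps)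
  then show vk: "vnorm k = \<rho>" unfolding vnorm_def using \<rho> by simp
  show "k \<noteq> 0\<^sub>v m" using vk \<rho> unfolding vnorm_def by auto
qed

section \<open>Instability for uniform projections\<close>

lemma uniform_scalar_root:
  fixes \<sigma> u a :: real
  assumes \<sigma>: "\<sigma> \<ge> 0" and disc: "\<sigma> * u\<^sup>2 > (1 + \<sigma>) * a"
  shows "\<exists>z. Re z > 0 \<and> z\<^sup>2 + of_real a + of_real \<sigma> * (z + \<i> * of_real u)\<^sup>2 = 0"
proof -
  define t where "t = 1 + \<sigma>"
  define s where "s = sqrt (\<sigma> * u\<^sup>2 - t * a)"
  have t: "t > 0" using \<sigma> unfolding t_def by simp
  have s: "s > 0" "s\<^sup>2 = \<sigma> * u\<^sup>2 - t * a"
    using disc unfolding s_def t_def by simp_all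
  define z where "z = (of_real s - \<i> * of_real (u * \<sigma>)) / of_real t"
  have tz: "of_real t * z = of_real s - \<i> * of_real (u * \<sigma>)"
    using t unfolding z_def by simp
  have "of_real (t\<^sup>2) * (z\<^sup>2 + of_real a + of_real \<sigma> * (z + \<i> * of_real u)\<^sup>2)
      = (of_real t * z)\<^sup>2 + of_real (t\<^sup>2 * a) + of_real \<sigma> * (of_real t * z + \<i> * of_real (u * t))\<^sup>2"
    by (simp add: algebra_simps power2_eq_square)
  also have "\<dots> = (of_real s - \<i> * of_real (u * \<sigma>))\<^sup>2 + of_real (t\<^sup>2 * a)
      + of_real \<sigma> * (of_real s - \<i> * of_real (u * \<sigma>) + \<i> * of_real (u * t))\<^sup>2"
    by (simp only: tz)
  also have "\<dots> = of_real (t * (s\<^sup>2 - \<sigma> * u\<^sup>2 + t * a))"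
    by (simp add: t_def algebra_simps power2_eq_square)
  also have "\<dots> = 0" using s by simp
  finally have "z\<^sup>2 + of_real a + of_real \<sigma> * (z + \<i> * of_real u)\<^sup>2 = 0" using t by simp
  moreover have "Re z > 0" using s t unfolding z_def by simp
  ultimately show ?thesis by blast
qed

lemma discriminant_positive:
  fixes a c \<sigma> u :: real
  assumes a: "a > 0" and c: "c \<ge> 0" and \<sigma>: "\<sigma> \<ge> 2 * c" and large: "2 * c * (u\<^sup>2 - a) > a"
  shows "\<sigma> * u\<^sup>2 > (1 + \<sigma>) * a"
proof -
  have "u\<^sup>2 - a > 0"
  proof (rule ccontr)
    assume "\<not> u\<^sup>2 - a > 0"
    then have "2 * c * (u\<^sup>2 - a) \<le> 0" using c by (intro mult_nonneg_nonpos) auto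
    then show False using large a by linarith
  qed
  then have "\<sigma> * (u\<^sup>2 - a) \<ge> 2 * c * (u\<^sup>2 - a)"
    using \<sigma> by (intro mult_right_mono) auto
  with large show ?thesis by (simp add: algebra_simps)
qed

text \<open>For uniform projections an eigenvector of \<open>P\<close> with eigenvalue \<open>1 + \<sigma>\<close> reduces \<open>L(z)\<close> to
  the scalar relation; the edge gaps make \<open>\<sigma>\<close> large enough.\<close>

lemma unstable_if_uniform_projection:
  assumes h: "\<forall>i\<le>n. h i < h (Suc i)" and n: "n \<ge> 1" and \<rho>: "vnorm k > 0"
    and U: "\<forall>l\<le>n. k \<bullet> U l = u"
    and c: "\<And>l. l \<le> n \<Longrightarrow> gap h (vnorm k) l \<ge> c" and c0: "c \<ge> 0"
    and large: "2 * c * (u\<^sup>2 - vnorm k ^ 4) > vnorm k ^ 4"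
  shows "\<exists>z. Re z > 0 \<and> eigenvalue (N_mat n h U k) z"
proof -
  let ?P = "cmat (P_mat n h k)" and ?a = "vnorm k ^ 4"
  obtain p where p: "eigenvalue ?P p"
    using spectrum_non_empty[of ?P n] n unfolding spectrum_def by auto
  then obtain x where x: "x \<in> carrier_vec n" "x \<noteq> 0\<^sub>v n" "?P *\<^sub>v x = p \<cdot>\<^sub>v x"
    unfolding eigenvalue_def eigenvector_def by auto
  define \<sigma> where "\<sigma> = Re p - 1"
  have "Im p = 0" and "\<sigma> \<ge> 2 * c"
    using P_mat_eigenvalue[OF h \<rho> c p] unfolding \<sigma>_def by auto
  then have p_eq: "p = of_real (1 + \<sigma>)" by (simp add: \<sigma>_def complex_eq_iff)
  have "\<sigma> * u\<^sup>2 > (1 + \<sigma>) * ?a"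
    using \<rho> by (intro discriminant_positive[OF _ c0 \<open>\<sigma> \<ge> 2 * c\<close> large]) simp
  then obtain z where z: "Re z > 0" "z\<^sup>2 + of_real ?a + of_real \<sigma> * (z + \<i> * of_real u)\<^sup>2 = 0"
    using uniform_scalar_root[where \<sigma> = \<sigma> and u = u and a = ?a] \<open>\<sigma> \<ge> 2 * c\<close> c0 by auto
  let ?w = "z + \<i> * of_real u"
  have "disp_mat n h U k z *\<^sub>v x = (z\<^sup>2 + of_real ?a - ?w\<^sup>2) \<cdot>\<^sub>v x + ?w\<^sup>2 \<cdot>\<^sub>v (p \<cdot>\<^sub>v x)"
    unfolding disp_mat_uniform[OF U] mult_vec_affine[OF cmat_carrier[OF P_mat_carrier] x(1)] x(3) ..
  also have "\<dots> = (z\<^sup>2 + of_real ?a + of_real \<sigma> * ?w\<^sup>2) \<cdot>\<^sub>v x"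
    unfolding p_eq using x(1) by (intro eq_vecI) (auto simp: algebra_simps)
  also have "\<dots> = 0\<^sub>v n"
    using z(2) x(1) by (intro eq_vecI) auto
  finally have "disp_mat n h U k z *\<^sub>v x = 0\<^sub>v n" .
  then have "det (disp_mat n h U k z) = 0"
    using det_0_iff_vec_prod_zero[OF disp_mat_carrier] x(1,2) by blast
  then show ?thesis
    using z(1) eigenvalue_N_mat_iff[OF h \<rho>] by blast
qed

lemma gap_limit:
  assumes "d > 0" and "r > 0"
  shows "((\<lambda>\<rho>::real. (coth (\<rho> * d) - csch (\<rho> * d)) / \<rho> - \<rho>\<^sup>2 / (r\<^sup>2 - \<rho>\<^sup>2)) \<longlongrightarrow> d / 2) (at_right 0)"
  using assms unfolding coth_def csch_def cosh_field_def sinh_field_def by real_asymp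

lemma small_wavenumber_gap:
  assumes h: "\<forall>i\<le>n. h i < h (Suc i)" and r: "r > 0"
  shows "\<exists>\<rho>. 0 < \<rho> \<and> \<rho> < r \<and> (\<forall>l\<le>n. gap h \<rho> l \<ge> \<rho>\<^sup>2 / (r\<^sup>2 - \<rho>\<^sup>2))"
proof -
  have "\<forall>\<^sub>F \<rho> in at_right 0. gap h \<rho> l - \<rho>\<^sup>2 / (r\<^sup>2 - \<rho>\<^sup>2) > 0" if "l \<le> n" for l
    using order_tendstoD(1)[OF gap_limit[OF dh_pos[OF h that] r], of 0] dh_pos[OF h that]
    unfolding gap_def by simp
  then have "\<forall>\<^sub>F \<rho> in at_right 0. \<forall>l\<in>{..n}. gap h \<rho> l - \<rho>\<^sup>2 / (r\<^sup>2 - \<rho>\<^sup>2) > 0"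
    by (intro eventually_ball_finite) auto
  moreover have "\<forall>\<^sub>F \<rho> in at_right 0. 0 < \<rho> \<and> \<rho> < r"
    using r by (auto simp: eventually_at_right_field intro: exI[of _ r])
  ultimately have "\<forall>\<^sub>F \<rho> in at_right 0. (0 < \<rho> \<and> \<rho> < r) \<and> (\<forall>l\<in>{..n}. gap h \<rho> l - \<rho>\<^sup>2 / (r\<^sup>2 - \<rho>\<^sup>2) > 0)"
    by (rule eventually_conj[rotated])
  from eventually_happens'[OF trivial_limit_at_right_real this] show ?thesis
    by (auto intro: less_imp_le)
qed

lemma unstable_if_uniform_direction:
  assumes h: "\<forall>i\<le>n. h i < h (Suc i)" and n: "n \<ge> 1"
    and e: "e \<in> carrier_vec m" "vnorm e > 0" and U: "\<forall>l\<le>n. U l \<in> carrier_vec m"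
    and uniform: "\<forall>l\<le>n. e \<bullet> U l = e \<bullet> e"
  shows "\<exists>k\<in>carrier_vec m. k \<noteq> 0\<^sub>v m \<and> (\<exists>z. eigenvalue (N_mat n h U k) z \<and> Re z > 0)"
proof -
  let ?r = "vnorm e"
  obtain \<rho> where \<rho>: "0 < \<rho>" "\<rho> < ?r" and gap: "\<forall>l\<le>n. gap h \<rho> l \<ge> \<rho>\<^sup>2 / (?r\<^sup>2 - \<rho>\<^sup>2)"
    using small_wavenumber_gap[OF h e(2)] by blast
  define k where "k = (\<rho> / ?r) \<cdot>\<^sub>v e"
  have k: "k \<in> carrier_vec m" "vnorm k = \<rho>" "k \<noteq> 0\<^sub>v m" "\<And>w. w \<in> carrier_vec m \<Longrightarrow> k \<bullet> w = \<rho> * (e \<bullet> w / ?r)"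
    using scaled_direction[OF e \<rho>(1)] unfolding k_def by auto
  have ku: "\<forall>l\<le>n. k \<bullet> U l = \<rho> * ?r"
    using k(4) U uniform vnorm_sq[OF e(2)] e(2) by (simp add: power2_eq_square)
  have "?r\<^sup>2 - \<rho>\<^sup>2 > 0" using \<rho> by (simp add: power_strict_mono)
  then have large: "2 * (\<rho>\<^sup>2 / (?r\<^sup>2 - \<rho>\<^sup>2)) * ((\<rho> * ?r)\<^sup>2 - vnorm k ^ 4) > vnorm k ^ 4"
    using \<rho>(1) k(2) by (simp add: field_simps power2_eq_square power4_eq_xxxx)
  obtain z where "Re z > 0" "eigenvalue (N_mat n h U k) z"
    using unstable_if_uniform_projection[OF h n _ ku _ _ large] k(2) \<rho>(1) gap \<open>?r\<^sup>2 - \<rho>\<^sup>2 > 0\<close>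
    by auto
  then show ?thesis using k(1,3) by blast
qed

section \<open>Long-wave limits and instability for non-uniform projections\<close>

lemma rho_coth_limit: "d > 0 \<Longrightarrow> ((\<lambda>\<rho>::real. \<rho> * coth (\<rho> * d)) \<longlongrightarrow> inverse d) (at_right 0)"
  unfolding coth_def cosh_field_def sinh_field_def by real_asymp

lemma rho_csch_limit: "d > 0 \<Longrightarrow> ((\<lambda>\<rho>::real. \<rho> * csch (\<rho> * d)) \<longlongrightarrow> inverse d) (at_right 0)"
  unfolding csch_def sinh_field_def by real_asymp

lemma ctri_scaled_entry:
  assumes i: "i < n" and j: "j < n" and \<rho>: "\<rho> > 0"
  shows "ctri n \<rho> h (\<lambda>l. of_real (\<rho>\<^sup>2) * b l) $$ (i,j) =
      (if i = j then b i * of_real (\<rho> * coth (\<rho> * dh h i)) + b (Suc i) * of_real (\<rho> * coth (\<rho> * dh h (Suc i)))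
       else if j = Suc i then - b (Suc i) * of_real (\<rho> * csch (\<rho> * dh h (Suc i)))
       else if i = Suc j then - b (Suc j) * of_real (\<rho> * csch (\<rho> * dh h (Suc j))) else 0)"
  unfolding ctri_def using i j \<rho> by (simp add: power2_eq_square add_divide_distrib)

lemma ctri_limit:
  assumes d: "\<And>l. l \<le> n \<Longrightarrow> dh h l > 0" and i: "i < n" and j: "j < n"
  shows "((\<lambda>\<rho>. ctri n \<rho> h (\<lambda>l. of_real (\<rho>\<^sup>2) * b l) $$ (i,j))
      \<longlongrightarrow> path_lap n (\<lambda>l. b l / of_real (dh h l)) $$ (i,j)) (at_right 0)"
proof -
  define C where "C l \<rho> = complex_of_real (\<rho> * coth (\<rho> * dh h l))" for l \<rho>
  define S where "S l \<rho> = complex_of_real (\<rho> * csch (\<rho> * dh h l))" for l \<rho>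
  have C: "((\<lambda>\<rho>. b * C l \<rho>) \<longlongrightarrow> b / of_real (dh h l)) (at_right 0)" if "l \<le> n" for l b
    using tendsto_mult_left[OF tendsto_of_real[OF rho_coth_limit[OF d[OF that]]], of b]
    unfolding C_def by (simp add: divide_inverse)
  have S: "((\<lambda>\<rho>. b * S l \<rho>) \<longlongrightarrow> b / of_real (dh h l)) (at_right 0)" if "l \<le> n" for l b
    using tendsto_mult_left[OF tendsto_of_real[OF rho_csch_limit[OF d[OF that]]], of b]
    unfolding S_def by (simp add: divide_inverse)
  define E where "E \<rho> = (if i = j then b i * C i \<rho> + b (Suc i) * C (Suc i) \<rho>
       else if j = Suc i then - b (Suc i) * S (Suc i) \<rho>
       else if i = Suc j then - b (Suc j) * S (Suc j) \<rho> else 0)" for \<rho>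
  have ev: "\<forall>\<^sub>F \<rho> in at_right 0. ctri n \<rho> h (\<lambda>l. of_real (\<rho>\<^sup>2) * b l) $$ (i,j) = E \<rho>"
    unfolding eventually_at_right_field E_def C_def S_def
    by (intro exI[of _ "1::real"] conjI allI impI ctri_scaled_entry[OF i j]) simp_all
  have "(E \<longlongrightarrow> path_lap n (\<lambda>l. b l / of_real (dh h l)) $$ (i,j)) (at_right 0)"
  proof -
    consider "i = j" | "i \<noteq> j" "j = Suc i" | "i \<noteq> j" "j \<noteq> Suc i" "i = Suc j"
      | "i \<noteq> j" "j \<noteq> Suc i" "i \<noteq> Suc j" by blast
    then show ?thesis
    proof cases
      case 1
      then show ?thesis unfolding E_def using i by (simp add: path_lap_def) (intro tendsto_add C; simp)
    next
      case 2
      then show ?thesis unfolding E_def using j by (simp add: path_lap_def) (intro tendsto_minus S; simp)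
    next
      case 3
      then show ?thesis unfolding E_def using i by (simp add: path_lap_def) (intro tendsto_minus S; simp)
    next
      case 4
      then show ?thesis unfolding E_def using i j by (simp add: path_lap_def)
    qed
  qed
  then show ?thesis using tendsto_cong[OF ev] by simp
qed

lemma cmat_P_mat: "cmat (P_mat n h k) = 1\<^sub>m n + ctri n (vnorm k) h (\<lambda>_. 1)"
  by (intro eq_matI) (auto simp: P_mat_def tri_mat_def ctri_def)

lemma scaled_P_mat_entry:
  assumes "i < n" and "j < n"
  shows "(c \<cdot>\<^sub>m cmat (P_mat n h k)) $$ (i,j) = c * 1\<^sub>m n $$ (i,j) + ctri n (vnorm k) h (\<lambda>_. c) $$ (i,j)"
  using assms unfolding cmat_P_mat by (simp add: ctri_def algebra_simps add_divide_distrib)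

lemma disp_mat_scaled_entry:
  assumes \<rho>: "vnorm k = \<rho>" and ku: "\<And>l. l \<le> n \<Longrightarrow> k \<bullet> U l = \<rho> * v l"
    and i: "i < n" and j: "j < n"
  shows "disp_mat n h U k (\<i> * of_real \<rho> * \<nu>) $$ (i,j)
      = (of_real (\<rho> ^ 4) - of_real (\<rho>\<^sup>2) * \<nu>\<^sup>2) * 1\<^sub>m n $$ (i,j)
        + ctri n \<rho> h (\<lambda>l. of_real (\<rho>\<^sup>2) * - (\<nu> + of_real (v l))\<^sup>2) $$ (i,j)"
proof -
  have "ctri n \<rho> h (\<lambda>l. (\<i> * of_real \<rho> * \<nu> + \<i> * of_real (k \<bullet> U l))\<^sup>2)
      = ctri n \<rho> h (\<lambda>l. of_real (\<rho>\<^sup>2) * - (\<nu> + of_real (v l))\<^sup>2)"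
    by (intro ctri_cong) (simp add: ku power2_eq_square algebra_simps)
  then show ?thesis
    unfolding disp_mat_def \<rho> using i j by (simp add: power2_eq_square algebra_simps)
qed

lemma scaled_P_mat_limit:
  assumes d: "\<And>l. l \<le> n \<Longrightarrow> dh h l > 0" and kk: "\<And>\<rho>. \<rho> > 0 \<Longrightarrow> vnorm (kk \<rho>) = \<rho>"
    and i: "i < n" and j: "j < n"
  shows "((\<lambda>\<rho>. (of_real (\<rho>\<^sup>2) \<cdot>\<^sub>m cmat (P_mat n h (kk \<rho>))) $$ (i,j))
      \<longlongrightarrow> path_lap n (\<lambda>l. 1 / of_real (dh h l)) $$ (i,j)) (at_right 0)"
proof -
  have ev: "\<forall>\<^sub>F \<rho> in at_right 0. (of_real (\<rho>\<^sup>2) \<cdot>\<^sub>m cmat (P_mat n h (kk \<rho>))) $$ (i,j)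
      = of_real (\<rho>\<^sup>2) * 1\<^sub>m n $$ (i,j) + ctri n \<rho> h (\<lambda>l. of_real (\<rho>\<^sup>2) * 1) $$ (i,j)"
    unfolding eventually_at_right_field
    by (intro exI[of _ "1::real"] conjI allI impI) (simp_all add: scaled_P_mat_entry[OF i j] kk)
  have "((\<lambda>\<rho>. of_real (\<rho>\<^sup>2) * 1\<^sub>m n $$ (i,j) + ctri n \<rho> h (\<lambda>l. of_real (\<rho>\<^sup>2) * 1) $$ (i,j))
      \<longlongrightarrow> 0 * 1\<^sub>m n $$ (i,j) + path_lap n (\<lambda>l. 1 / of_real (dh h l)) $$ (i,j)) (at_right 0)"
    by (intro tendsto_add tendsto_mult ctri_limit[OF d i j] tendsto_const)
      (auto intro!: tendsto_eq_intros)
  then show ?thesis using tendsto_cong[OF ev] by simp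
qed

lemma scaled_disp_mat_limit:
  assumes d: "\<And>l. l \<le> n \<Longrightarrow> dh h l > 0" and kk: "\<And>\<rho>. \<rho> > 0 \<Longrightarrow> vnorm (kk \<rho>) = \<rho>"
    and ku: "\<And>\<rho> l. \<rho> > 0 \<Longrightarrow> l \<le> n \<Longrightarrow> kk \<rho> \<bullet> U l = \<rho> * v l"
    and i: "i < n" and j: "j < n"
  shows "((\<lambda>\<rho>. disp_mat n h U (kk \<rho>) (\<i> * of_real \<rho> * \<nu>) $$ (i,j))
      \<longlongrightarrow> path_lap n (\<lambda>l. - (\<nu> + of_real (v l))\<^sup>2 / of_real (dh h l)) $$ (i,j)) (at_right 0)"
proof -
  have ev: "\<forall>\<^sub>F \<rho> in at_right 0. disp_mat n h U (kk \<rho>) (\<i> * of_real \<rho> * \<nu>) $$ (i,j)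
      = (of_real (\<rho> ^ 4) - of_real (\<rho>\<^sup>2) * \<nu>\<^sup>2) * 1\<^sub>m n $$ (i,j)
        + ctri n \<rho> h (\<lambda>l. of_real (\<rho>\<^sup>2) * - (\<nu> + of_real (v l))\<^sup>2) $$ (i,j)"
    unfolding eventually_at_right_field
    by (intro exI[of _ "1::real"] conjI allI impI disp_mat_scaled_entry[OF kk ku i j]) simp_all
  have "((\<lambda>\<rho>. (of_real (\<rho> ^ 4) - of_real (\<rho>\<^sup>2) * \<nu>\<^sup>2) * 1\<^sub>m n $$ (i,j)
        + ctri n \<rho> h (\<lambda>l. of_real (\<rho>\<^sup>2) * - (\<nu> + of_real (v l))\<^sup>2) $$ (i,j))
      \<longlongrightarrow> (0 - 0 * \<nu>\<^sup>2) * 1\<^sub>m n $$ (i,j)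
        + path_lap n (\<lambda>l. - (\<nu> + of_real (v l))\<^sup>2 / of_real (dh h l)) $$ (i,j)) (at_right 0)"
    by (intro tendsto_add tendsto_mult tendsto_diff ctri_limit[OF d i j] tendsto_const)
      (auto intro!: tendsto_eq_intros)
  then show ?thesis using tendsto_cong[OF ev] by simp
qed

text \<open>The growth bound at \<open>z = i\<rho>\<nu>\<close>, rescaled so that both sides have finite limits.\<close>

lemma scaled_det_bound:
  assumes h: "\<forall>i\<le>n. h i < h (Suc i)" and \<rho>: "vnorm k = \<rho>" "\<rho> > 0"
    and stable: "\<forall>w. eigenvalue (N_mat n h U k) w \<longrightarrow> Re w \<le> 0" and \<nu>: "Im \<nu> \<le> 0"
  shows "cmod (det (of_real (\<rho>\<^sup>2) \<cdot>\<^sub>m cmat (P_mat n h k))) * (- Im \<nu>) ^ (2 * n)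
      \<le> cmod (det (disp_mat n h U k (\<i> * of_real \<rho> * \<nu>)))"
proof -
  have "Re (\<i> * of_real \<rho> * \<nu>) = \<rho> * - Im \<nu>" by simp
  moreover have "\<rho> * - Im \<nu> \<ge> 0" using \<rho> \<nu> by (simp add: mult_le_0_iff)
  ultimately have "cmod (det (cmat (P_mat n h k))) * (\<rho> * - Im \<nu>) ^ (2 * n)
      \<le> cmod (det (disp_mat n h U k (\<i> * of_real \<rho> * \<nu>)))"
    using disp_mat_det_lower_bound[OF h _ stable, of "\<i> * of_real \<rho> * \<nu>"] \<rho> by simp
  moreover have "cmod (det (of_real (\<rho>\<^sup>2) \<cdot>\<^sub>m cmat (P_mat n h k))) = \<rho> ^ (2 * n) * cmod (det (cmat (P_mat n h k)))"
    using \<rho> by (simp add: norm_mult norm_power power_mult)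
  ultimately show ?thesis by (simp add: algebra_simps)
qed

text \<open>If the projections onto \<open>e\<close> are not all equal there is a growing mode: otherwise the
  rescaled bound would pass to the limit and give \<open>0 < |det path_lap(1/\<Delta>h)| |Im \<nu>|\<^sup>2\<^sup>n \<le> 0\<close>.\<close>

lemma unstable_if_nonuniform_projection:
  assumes h: "\<forall>i\<le>n. h i < h (Suc i)" and n: "n \<ge> 1"
    and e: "e \<in> carrier_vec m" "vnorm e > 0" and U: "\<forall>l\<le>n. U l \<in> carrier_vec m"
    and ij: "i0 \<le> n" "j0 \<le> n" "e \<bullet> U i0 \<noteq> e \<bullet> U j0"
  shows "\<exists>k\<in>carrier_vec m. k \<noteq> 0\<^sub>v m \<and> (\<exists>z. eigenvalue (N_mat n h U k) z \<and> Re z > 0)"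
proof (rule ccontr)
  assume no_growth: "\<not> ?thesis"
  define kk where "kk \<rho> = (\<rho> / vnorm e) \<cdot>\<^sub>v e" for \<rho>
  define v where "v l = e \<bullet> U l / vnorm e" for l
  note kk = scaled_direction[OF e, folded kk_def]
  have ku: "kk \<rho> \<bullet> U l = \<rho> * v l" if "\<rho> > 0" "l \<le> n" for \<rho> l
    using kk(4)[OF that(1)] U that(2) unfolding v_def by simp
  have stable: "\<forall>w. eigenvalue (N_mat n h U (kk \<rho>)) w \<longrightarrow> Re w \<le> 0" if "\<rho> > 0" for \<rho>
    using no_growth kk(1,3)[OF that] by (auto simp: not_less)
  have d: "dh h l > 0" if "l \<le> n" for l using dh_pos[OF h that] .
  obtain \<nu> where \<nu>: "Im \<nu> < 0" "(\<Sum>l\<le>n. of_real (dh h l) / (\<nu> + of_real (v l))\<^sup>2) = 0"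
    using projection_root[of n "dh h" i0 j0 v] d ij e(2) unfolding v_def by auto
  define c where "c l = - (\<nu> + of_real (v l))\<^sup>2 / of_real (dh h l)" for l
  have singular: "det (path_lap n c) = 0"
    unfolding c_def using \<nu> by (intro path_lap_singular_at_root[OF n]) (auto intro: d)
  have regular: "det (path_lap n (\<lambda>l. 1 / complex_of_real (dh h l))) \<noteq> 0"
    using d by (intro path_lap_regular) auto
  have lim_disp: "((\<lambda>\<rho>. cmod (det (disp_mat n h U (kk \<rho>) (\<i> * of_real \<rho> * \<nu>))))
      \<longlongrightarrow> cmod (det (path_lap n c))) (at_right 0)"
    unfolding c_def using d kk(2) ku
    by (intro tendsto_norm det_tendsto[of _ n] scaled_disp_mat_limit) auto
  have lim_P: "((\<lambda>\<rho>. cmod (det (of_real (\<rho>\<^sup>2) \<cdot>\<^sub>m cmat (P_mat n h (kk \<rho>)))) * (- Im \<nu>) ^ (2 * n))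
      \<longlongrightarrow> cmod (det (path_lap n (\<lambda>l. 1 / complex_of_real (dh h l)))) * (- Im \<nu>) ^ (2 * n)) (at_right 0)"
    using d kk(2)
    by (intro tendsto_mult_right tendsto_norm det_tendsto[of _ n] scaled_P_mat_limit) auto
  have bound: "\<forall>\<^sub>F \<rho> in at_right 0.
      cmod (det (of_real (\<rho>\<^sup>2) \<cdot>\<^sub>m cmat (P_mat n h (kk \<rho>)))) * (- Im \<nu>) ^ (2 * n)
      \<le> cmod (det (disp_mat n h U (kk \<rho>) (\<i> * of_real \<rho> * \<nu>)))"
    unfolding eventually_at_right_field using \<nu>(1)
    by (intro exI[of _ "1::real"] conjI allI impI scaled_det_bound[OF h kk(2) _ stable]) auto
  have "cmod (det (path_lap n (\<lambda>l. 1 / complex_of_real (dh h l)))) * (- Im \<nu>) ^ (2 * n)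
      \<le> cmod (det (path_lap n c))"
    by (rule tendsto_le[OF trivial_limit_at_right_real lim_disp lim_P bound])
  moreover have "cmod (det (path_lap n (\<lambda>l. 1 / complex_of_real (dh h l)))) * (- Im \<nu>) ^ (2 * n) > 0"
    using regular \<nu>(1) by (intro mult_pos_pos zero_less_power) auto
  ultimately show False using singular by simp
qed

lemma unstable_if_nonzero_velocity:
  assumes h: "\<forall>i\<le>n. h i < h (Suc i)" and n: "n \<ge> 1" and U: "\<forall>l\<le>n. U l \<in> carrier_vec m"
    and i0: "i0 \<le> n" "U i0 \<noteq> 0\<^sub>v m"
  shows "\<exists>k\<in>carrier_vec m. k \<noteq> 0\<^sub>v m \<and> (\<exists>z. eigenvalue (N_mat n h U k) z \<and> Re z > 0)"
proof -
  have e: "U i0 \<in> carrier_vec m" "vnorm (U i0) > 0"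
    using U i0 vnorm_pos[of "U i0" m] by auto
  show ?thesis
  proof (cases "\<forall>l\<le>n. U i0 \<bullet> U l = U i0 \<bullet> U i0")
    case True
    then show ?thesis by (rule unstable_if_uniform_direction[OF h n e U])
  next
    case False
    then obtain j0 where "j0 \<le> n" "U i0 \<bullet> U i0 \<noteq> U i0 \<bullet> U j0" by auto
    then show ?thesis by (rule unstable_if_nonuniform_projection[OF h n e U i0(1)])
  qed
qed

lemma stable_if_zero_velocity:
  assumes h: "\<forall>i\<le>n. h i < h (Suc i)" and U0: "\<forall>l\<le>n. U l = 0\<^sub>v m"
    and k: "k \<in> carrier_vec m" "k \<noteq> 0\<^sub>v m" and z: "eigenvalue (N_mat n h U k) z"
  shows "Re z = 0"
  using stable_if_orthogonal[OF h vnorm_pos[OF k] _ z] k(1) U0 by simp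

theorem corollary5p4:
  fixes m n :: nat and h :: "nat \<Rightarrow> real" and U :: "nat \<Rightarrow> real vec"
  assumes "m \<ge> 1" and "n \<ge> 1"
    and "\<forall>i\<le>n. h i < h (Suc i)"
    and "\<forall>i\<le>n. U i \<in> carrier_vec m"
  shows "((\<forall>i\<le>n. U i = 0\<^sub>v m) \<longleftrightarrow>
           (\<forall>k \<in> carrier_vec m. k \<noteq> 0\<^sub>v m \<longrightarrow>
              (\<forall>z. eigenvalue (N_mat n h U k) z \<longrightarrow> Re z = 0)))
       \<and> ((\<exists>i\<le>n. U i \<noteq> 0\<^sub>v m) \<longrightarrow>
           (\<exists>k \<in> carrier_vec m. k \<noteq> 0\<^sub>v m \<and>
              (\<exists>z. eigenvalue (N_mat n h U k) z \<and> Re z > 0)))"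
proof -
  have unstable: "(\<exists>i\<le>n. U i \<noteq> 0\<^sub>v m) \<longrightarrow>
      (\<exists>k \<in> carrier_vec m. k \<noteq> 0\<^sub>v m \<and> (\<exists>z. eigenvalue (N_mat n h U k) z \<and> Re z > 0))"
    using unstable_if_nonzero_velocity[OF assms(3,2,4)] by blast
  have stable: "(\<forall>i\<le>n. U i = 0\<^sub>v m) \<longrightarrow>
      (\<forall>k \<in> carrier_vec m. k \<noteq> 0\<^sub>v m \<longrightarrow> (\<forall>z. eigenvalue (N_mat n h U k) z \<longrightarrow> Re z = 0))"
    using stable_if_zero_velocity[OF assms(3)] by blast
  show ?thesis
    using unstable stable by (metis less_irrefl)
qed

end
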